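(* Let $0<\gamma<1/3$. There are positive constants $c_1=c_1(\gamma)$ and $c_2=c_2(\gamma)$ such that for $\pi(N)(1+o(1))$ primes $p\le N$ (as $N\to\infty$) we have $$c_1N^{\gamma/2}\le\frac{1}{p}\sum_{x=0}^{p-1}\left|\sum_{n\le N^{\gamma}}e^{2\pi i\frac{x}{p}F_n}\right|\le c_2N^{\gamma/2}.$$
   Context: $\{F_n\}$ is the Fibonacci sequence: $F_1=F_2=1$, $F_{n+2}=F_{n+1}+F_n$ for $n\ge1$. $\pi(N)$ denotes the number of primes $p\le N$. *)

theory Defs
  imports "HOL-Analysis.Analysis" "HOL-Number_Theory.Fib"
begin

text \<open>The library function fib satisfies fib 1 = fib 2 = 1, matching F_n for n >= 1.\<close>
definition fib_avg :: "nat \<Rightarrow> nat \<Rightarrow> real \<Rightarrow> real" where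
  "fib_avg p N \<gamma> = (1 / real p) *
     (\<Sum>x = 0..p - 1. cmod (\<Sum>n \<in> {n. 1 \<le> n \<and> real n \<le> real N powr \<gamma>}.
        exp (2 * complex_of_real pi * \<i> * complex_of_real (real x * real (fib n) / real p))))"

end

theory Submission
  imports Defs "HOL-Real_Asymp.Real_Asymp"
begin

(*
  Fix a prime p, let K = floor (N^gamma) and S(x) = sum_{n <= K} e(x F_n / p).  By orthogonality,
  sum_x |S(x)|^2 is p times the number of pairs with F_a = F_b (mod p), hence at least pK, and
  sum_x |S(x)|^4 is p times the number of quadruples with F_a + F_b = F_c + F_d (mod p).  Since the
  Fibonacci numbers grow geometrically, only O(K^2) quadruples satisfy F_a + F_b = F_c + F_d exactly.
  Any other congruence makes p divide a nonzero integer below 2^(K+1), which has at most K + 1 prime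
  factors; so by double counting all but O(K^3) = O(N^(3 gamma)) primes admit at most K^2 of them.
  For the remaining primes the fourth moment is O(p K^2), and Hoelder's inequality between the
  first, second and fourth moments traps the mean of |S| between constant multiples of sqrt K.
  As 3 gamma < 1, Chebyshev's bound pi(N) >= N / (6 log N) makes the exceptional primes negligible.
*)

section \<open>Chebyshev's lower bound for the prime counting function\<close>

lemma multiplicity_fact_Legendre:
  fixes p m B :: nat
  assumes p: "prime p" and m: "m < p ^ Suc B"
  shows "multiplicity p (fact m :: nat) = (\<Sum>i=1..B. m div p ^ i)"
  using m
proof (induction m)
  case 0
  then show ?case by simp
next
  case (Suc m)
  have p1: "p > 1" using p prime_gt_1_nat by blast
  have "{i\<in>{1..B}. p ^ i dvd Suc m} = {1..multiplicity p (Suc m)}"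
  proof -
    have "p ^ multiplicity p (Suc m) \<le> Suc m"
      by (intro dvd_imp_le multiplicity_dvd) auto
    also have "\<dots> < p ^ Suc B" using Suc.prems .
    finally have "multiplicity p (Suc m) < Suc B"
      using power_strict_increasing_iff[OF p1] by blast
    thus ?thesis using p p1 by (auto simp: power_dvd_iff_le_multiplicity)
  qed
  moreover have "Suc m div q = m div q + (if q dvd Suc m then 1 else 0)" for q
    by (auto simp: div_Suc dvd_eq_mod_eq_0)
  ultimately have "(\<Sum>i=1..B. Suc m div p ^ i) = (\<Sum>i=1..B. m div p ^ i) + multiplicity p (Suc m)"
    by (simp add: sum.distrib sum.If_cases Int_def conj_commute)
  moreover have "multiplicity p (Suc m * fact m :: nat) = multiplicity p (Suc m) + multiplicity p (fact m :: nat)"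
    using p by (intro prime_elem_multiplicity_mult_distrib) auto
  moreover have "fact (Suc m) = Suc m * (fact m :: nat)" by (simp only: fact_Suc of_nat_id)
  ultimately show ?case using Suc by simp
qed

lemma double_div_le: "(2 * n) div q \<le> 2 * (n div q) + (if q \<le> 2 * n then 1 else 0)"
  for n q :: nat
proof (cases "0 < q \<and> q \<le> 2 * n")
  case True
  then have "q > 0" by simp
  have "n = q * (n div q) + n mod q" "n mod q < q" using \<open>q > 0\<close> by simp_all
  then have "2 * n < q * (2 * (n div q) + 2)"
    by (metis add_mult_distrib2 mult_2 mult_2_right add_less_mono nat_add_left_cancel_less)
  then have "(2 * n) div q < 2 * (n div q) + 2"
    using \<open>q > 0\<close> by (simp add: div_less_iff_less_mult mult.commute)
  then show ?thesis using True by simp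
qed auto

lemma prime_power_multiplicity_central_binomial_le:
  fixes p n :: nat
  assumes p: "prime p" and n: "n > 0"
  shows "p ^ multiplicity p ((2 * n) choose n) \<le> 2 * n"
proof (rule ccontr)
  define v where "v = multiplicity p ((2 * n) choose n)"
  define B where "B = 2 * n"
  assume "\<not> p ^ multiplicity p ((2 * n) choose n) \<le> 2 * n"
  then have big: "2 * n < p ^ v" unfolding v_def by simp
  have p1: "p > 1" using p prime_gt_1_nat by blast
  have below: "k < p ^ Suc B" if "k \<le> 2 * n" for k
  proof -
    have "k < 2 ^ Suc B" using that less_exp[of "Suc B"] unfolding B_def by linarith
    also have "\<dots> \<le> p ^ Suc B" using p1 by (intro power_mono) auto
    finally show ?thesis .
  qed
  have "fact (2 * n) = ((2 * n) choose n) * (fact n * (fact n :: nat))"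
    using binomial_fact_lemma[of n "2 * n"] by (simp add: mult_ac)
  then have "multiplicity p (fact (2 * n) :: nat) = v + 2 * multiplicity p (fact n :: nat)"
    unfolding v_def using p by (simp add: prime_elem_multiplicity_mult_distrib)
  then have legendre: "(\<Sum>i=1..B. (2 * n) div p ^ i) = v + 2 * (\<Sum>i=1..B. n div p ^ i)"
    using multiplicity_fact_Legendre[OF p, of "2 * n" B] multiplicity_fact_Legendre[OF p, of n B]
      below by simp
  have "(\<Sum>i=1..B. (2 * n) div p ^ i)
      \<le> (\<Sum>i=1..B. 2 * (n div p ^ i) + (if p ^ i \<le> 2 * n then 1 else 0))"
    by (intro sum_mono double_div_le)
  also have "\<dots> = 2 * (\<Sum>i=1..B. n div p ^ i) + card {i\<in>{1..B}. p ^ i \<le> 2 * n}"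
    by (simp add: sum.distrib sum_distrib_left sum.If_cases Int_def conj_commute)
  finally have "v \<le> card {i\<in>{1..B}. p ^ i \<le> 2 * n}" using legendre by simp
  also have "\<dots> \<le> card {1..<v}"
  proof (rule card_mono)
    show "{i\<in>{1..B}. p ^ i \<le> 2 * n} \<subseteq> {1..<v}"
    proof
      fix i assume "i \<in> {i\<in>{1..B}. p ^ i \<le> 2 * n}"
      then have "1 \<le> i" "p ^ i < p ^ v" using big by auto
      then show "i \<in> {1..<v}" using power_strict_increasing_iff[OF p1] by simp
    qed
  qed simp
  finally show False using big n by (cases v) auto
qed

lemma double_le_two_power: "2 * n \<le> (2::nat) ^ n"
proof (induction n)
  case (Suc n)
  then show ?case by (cases n) auto
qed simp

lemma prime_count_central_binomial_bound:
  fixes n :: nat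
  assumes n: "n \<ge> 1"
  shows "real n * ln 2 \<le> real (card {p. prime p \<and> p \<le> 2 * n}) * ln (2 * real n)"
proof -
  define C where "C = (2 * n) choose n"
  define P where "P = {p. prime p \<and> p \<le> 2 * n}"
  have "prime_factors C \<subseteq> P"
  proof
    fix p assume "p \<in> prime_factors C"
    moreover have "C dvd fact (2 * n)"
      using binomial_fact_lemma[of n "2 * n"] unfolding C_def by (metis dvd_triv_right le_add2 mult_2)
    ultimately have "prime p" "p dvd fact (2 * n)" by (auto intro: dvd_trans)
    then show "p \<in> P" unfolding P_def using prime_dvd_fact_iff by auto
  qed
  have "C = (\<Prod>p\<in>prime_factors C. p ^ multiplicity p C)"
    using prod_prime_factors[of C] unfolding C_def by simp
  also have "\<dots> \<le> (\<Prod>p\<in>prime_factors C. 2 * n)"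
    unfolding C_def using n by (intro prod_mono conjI prime_power_multiplicity_central_binomial_le) auto
  also have "\<dots> = (2 * n) ^ card (prime_factors C)" by simp
  also have "\<dots> \<le> (2 * n) ^ card P"
    using n \<open>prime_factors C \<subseteq> P\<close> by (intro power_increasing card_mono) (auto simp: P_def)
  finally have C_le: "C \<le> (2 * n) ^ card P" .
  have "2 * real n \<le> 2 ^ n"
    using of_nat_mono[OF double_le_two_power[of n], where 'a=real] by simp
  then have "(2::real) ^ n * (2 * real n) \<le> 2 ^ n * 2 ^ n" by (intro mult_left_mono) auto
  also have "\<dots> = 4 ^ n" by (simp flip: power_mult_distrib)
  finally have "(2::real) ^ n \<le> 4 ^ n / (2 * real n)" using n by (simp add: field_simps)
  also have "\<dots> \<le> real C" unfolding C_def using central_binomial_lower_bound n by simp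
  also have "\<dots> \<le> (2 * real n) ^ card P" using of_nat_mono[OF C_le, where 'a=real] by simp
  finally have "ln ((2::real) ^ n) \<le> ln ((2 * real n) ^ card P)"
    using n by (subst ln_le_cancel_iff) auto
  then show ?thesis unfolding P_def by (simp only: ln_realpow)
qed

lemma prime_count_lower_bound:
  fixes N :: nat
  assumes N: "N \<ge> 2"
  shows "real N / (6 * ln (real N)) \<le> real (card {p. prime p \<and> p \<le> N})"
proof -
  define n where "n = N div 2"
  have "n \<ge> 1" "2 * n \<le> N" "N \<le> 3 * n" using N unfolding n_def by presburger+
  then have n: "n \<ge> 1" "2 * n \<le> N" "real N \<le> 3 * real n" by simp_all
  have "real n * (2 / 3) \<le> real n * ln 2" using ln2_ge_two_thirds by (intro mult_left_mono) auto
  then have "real N / 6 \<le> real n * ln 2" using n by linarith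
  also have "\<dots> \<le> real (card {p. prime p \<and> p \<le> 2 * n}) * ln (2 * real n)"
    by (rule prime_count_central_binomial_bound[OF n(1)])
  also have "\<dots> \<le> real (card {p. prime p \<and> p \<le> N}) * ln (real N)"
    using n by (intro mult_mono of_nat_mono card_mono) auto
  finally show ?thesis using N by (simp add: field_simps)
qed

lemma powr_div_prime_count_tendsto_0:
  assumes "a < 1"
  shows "((\<lambda>N. real N powr a / real (card {p. prime p \<and> p \<le> N})) \<longlongrightarrow> 0) at_top"
proof (rule tendsto_sandwich[where f="\<lambda>_. 0" and h="\<lambda>N. 6 * (ln (real N) / real N powr (1 - a))"])
  have "((\<lambda>x::real. ln x / x powr b) \<longlongrightarrow> 0) at_top" if "b > 0" for b
    using that by real_asymp
  then have "((\<lambda>x::real. 6 * (ln x / x powr (1 - a))) \<longlongrightarrow> 0) at_top"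
    using assms by (intro tendsto_mult_right_zero) simp
  then show "((\<lambda>N. 6 * (ln (real N) / real N powr (1 - a))) \<longlongrightarrow> 0) at_top"
    using filterlim_compose filterlim_real_sequentially by fastforce
  show "eventually (\<lambda>N. real N powr a / real (card {p. prime p \<and> p \<le> N})
      \<le> 6 * (ln (real N) / real N powr (1 - a))) at_top"
  proof (rule eventually_at_top_linorderI[of 2])
    fix N :: nat assume "N \<ge> 2"
    then have pos: "0 < real N" "0 < ln (real N)" "0 < real N / (6 * ln (real N))" by simp_all
    have bound: "real N / (6 * ln (real N)) \<le> real (card {p. prime p \<and> p \<le> N})"
      using \<open>N \<ge> 2\<close> by (rule prime_count_lower_bound)
    with pos have card_pos: "0 < real (card {p. prime p \<and> p \<le> N})" by linarith
    have "real N powr a / real (card {p. prime p \<and> p \<le> N}) \<le> real N powr a / (real N / (6 * ln (real N)))"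
      by (rule divide_left_mono[OF bound]) (use pos card_pos in auto)
    also have "\<dots> = 6 * (ln (real N) / real N powr (1 - a))"
      using pos by (simp add: powr_diff field_simps)
    finally show "real N powr a / real (card {p. prime p \<and> p \<le> N})
      \<le> 6 * (ln (real N) / real N powr (1 - a))" .
  qed
qed (auto)

section \<open>Exponential sums and moments\<close>

definition e2pi :: "real \<Rightarrow> complex" where
  "e2pi t = exp (2 * complex_of_real pi * \<i> * complex_of_real t)"

lemma e2pi_add: "e2pi (s + t) = e2pi s * e2pi t"
  unfolding e2pi_def by (simp add: distrib_left flip: exp_add)

lemma cnj_e2pi: "cnj (e2pi t) = e2pi (- t)"
  unfolding e2pi_def by (simp add: exp_cnj)

lemma e2pi_of_nat_mult: "e2pi (real k * t) = e2pi t ^ k"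
  unfolding e2pi_def by (simp add: mult_ac flip: exp_of_nat_mult)

lemma e2pi_eq_1_iff: "e2pi t = 1 \<longleftrightarrow> t \<in> \<int>"
proof
  assume "e2pi t = 1"
  then obtain n :: int where "2 * pi * t = of_int (2 * n) * pi"
    unfolding e2pi_def exp_eq_1 by auto
  then have "t = of_int n" by simp
  then show "t \<in> \<int>" by simp
next
  assume "t \<in> \<int>"
  then obtain k where "t = of_int k" by (elim Ints_cases)
  then show "e2pi t = 1"
    unfolding e2pi_def using exp_integer_2pi[of "of_int k"] by (simp add: mult_ac)
qed

lemma sum_e2pi_orthogonality:
  fixes p :: nat and t :: int
  assumes p: "p > 0"
  shows "(\<Sum>x<p. e2pi (real x * of_int t / real p)) = (if int p dvd t then of_nat p else 0)"
proof -
  define w where "w = e2pi (of_int t / real p)"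
  have powers: "e2pi (real x * of_int t / real p) = w ^ x" for x
    unfolding w_def by (simp flip: e2pi_of_nat_mult)
  have "w = 1 \<longleftrightarrow> int p dvd t"
  proof -
    have "of_int t / real p \<in> \<int> \<longleftrightarrow> int p dvd t"
      using of_int_div_of_int_in_Ints_iff[of t "int p", where 'a=real] p by simp
    then show ?thesis unfolding w_def e2pi_eq_1_iff .
  qed
  moreover have "w ^ p = 1"
    using p by (simp add: w_def e2pi_eq_1_iff flip: e2pi_of_nat_mult)
  ultimately show ?thesis
    by (cases "int p dvd t") (simp_all add: powers geometric_sum)
qed

lemma sum_norm_exp_sum_squared:
  fixes p :: nat and I :: "'a set" and g :: "'a \<Rightarrow> int"
  assumes p: "p > 0" and I: "finite I"
  shows "(\<Sum>x<p. (cmod (\<Sum>i\<in>I. e2pi (real x * of_int (g i) / real p)))\<^sup>2)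
         = real p * real (card {(i, j) \<in> I \<times> I. int p dvd g i - g j})"
proof -
  let ?e = "\<lambda>x t. e2pi (real x * of_int t / real p)"
  have square: "complex_of_real ((cmod (\<Sum>i\<in>I. ?e x (g i)))\<^sup>2)
      = (\<Sum>(i, j)\<in>I \<times> I. ?e x (g i - g j))" for x
  proof -
    have product: "?e x (g i) * cnj (?e x (g j)) = ?e x (g i - g j)" for i j
      by (simp add: cnj_e2pi diff_divide_distrib right_diff_distrib flip: e2pi_add)
    have "complex_of_real ((cmod (\<Sum>i\<in>I. ?e x (g i)))\<^sup>2)
        = (\<Sum>i\<in>I. ?e x (g i)) * cnj (\<Sum>i\<in>I. ?e x (g i))"
      by (rule complex_norm_square)
    also have "\<dots> = (\<Sum>i\<in>I. \<Sum>j\<in>I. ?e x (g i - g j))"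
      by (simp only: cnj_sum sum_product product)
    finally show ?thesis by (simp only: sum.cartesian_product)
  qed
  have "complex_of_real (\<Sum>x<p. (cmod (\<Sum>i\<in>I. ?e x (g i)))\<^sup>2)
      = (\<Sum>(i, j)\<in>I \<times> I. \<Sum>x<p. ?e x (g i - g j))"
    unfolding of_real_sum square by (subst sum.swap) (simp add: split_def)
  also have "\<dots> = (\<Sum>(i, j)\<in>I \<times> I. if int p dvd g i - g j then of_nat p else 0)"
    by (simp add: sum_e2pi_orthogonality[OF p] split_def del: of_int_diff)
  also have "\<dots> = of_real (real p * real (card {(i, j) \<in> I \<times> I. int p dvd g i - g j}))"
  proof -
    have "{(i, j) \<in> I \<times> I. int p dvd g i - g j} = {ij \<in> I \<times> I. int p dvd g (fst ij) - g (snd ij)}"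
      by auto
    then show ?thesis using I by (simp add: sum.If_cases Int_def split_def)
  qed
  finally show ?thesis by (simp only: of_real_eq_iff)
qed

lemma sum_fourth_power_ge:
  fixes u :: "'a \<Rightarrow> real"
  shows "(\<Sum>x\<in>X. u x) ^ 4 \<le> real (card X) ^ 3 * (\<Sum>x\<in>X. u x ^ 4)"
proof -
  have CS1: "(\<Sum>x\<in>X. u x)\<^sup>2 \<le> real (card X) * (\<Sum>x\<in>X. (u x)\<^sup>2)"
    using Cauchy_Schwarz_ineq_sum[of "\<lambda>_. 1" u X] by simp
  have CS2: "(\<Sum>x\<in>X. (u x)\<^sup>2)\<^sup>2 \<le> real (card X) * (\<Sum>x\<in>X. u x ^ 4)"
    using Cauchy_Schwarz_ineq_sum[of "\<lambda>_. 1" "\<lambda>x. (u x)\<^sup>2" X] by (simp flip: power_mult)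
  have "(\<Sum>x\<in>X. u x) ^ 4 = ((\<Sum>x\<in>X. u x)\<^sup>2)\<^sup>2" by (simp flip: power_mult)
  also have "\<dots> \<le> (real (card X) * (\<Sum>x\<in>X. (u x)\<^sup>2))\<^sup>2"
    using CS1 by (intro power_mono) auto
  also have "\<dots> \<le> (real (card X))\<^sup>2 * (real (card X) * (\<Sum>x\<in>X. u x ^ 4))"
    using CS2 by (simp add: power_mult_distrib mult_left_mono)
  finally show ?thesis by (simp add: power3_eq_cube power2_eq_square)
qed

lemma sum_squares_cube_le:
  fixes u :: "'a \<Rightarrow> real"
  assumes nonneg: "\<And>x. x \<in> X \<Longrightarrow> u x \<ge> 0"
  shows "(\<Sum>x\<in>X. (u x)\<^sup>2) ^ 3 \<le> (\<Sum>x\<in>X. u x)\<^sup>2 * (\<Sum>x\<in>X. u x ^ 4)"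
proof -
  define S where "S k = (\<Sum>x\<in>X. u x ^ k)" for k
  have S_nonneg: "S k \<ge> 0" for k unfolding S_def using nonneg by (intro sum_nonneg) auto
  have S2: "(S 2)\<^sup>2 \<le> S 1 * S 3"
  proof -
    have "(\<Sum>x\<in>X. sqrt (u x) * (sqrt (u x) * u x))\<^sup>2
        \<le> (\<Sum>x\<in>X. (sqrt (u x))\<^sup>2) * (\<Sum>x\<in>X. (sqrt (u x) * u x)\<^sup>2)"
      by (rule Cauchy_Schwarz_ineq_sum)
    moreover have "(\<Sum>x\<in>X. sqrt (u x) * (sqrt (u x) * u x)) = S 2"
      unfolding S_def using nonneg
      by (intro sum.cong refl) (simp add: power2_eq_square flip: mult.assoc)
    moreover have "(\<Sum>x\<in>X. (sqrt (u x))\<^sup>2) = S 1"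
      unfolding S_def using nonneg by (intro sum.cong refl) simp
    moreover have "(\<Sum>x\<in>X. (sqrt (u x) * u x)\<^sup>2) = S 3"
      unfolding S_def using nonneg
      by (intro sum.cong refl) (simp add: power_mult_distrib power3_eq_cube power2_eq_square)
    ultimately show ?thesis by simp
  qed
  have S3: "(S 3)\<^sup>2 \<le> S 2 * S 4"
  proof -
    have "(\<Sum>x\<in>X. u x * (u x)\<^sup>2)\<^sup>2 \<le> (\<Sum>x\<in>X. (u x)\<^sup>2) * (\<Sum>x\<in>X. ((u x)\<^sup>2)\<^sup>2)"
      by (rule Cauchy_Schwarz_ineq_sum)
    moreover have "(\<Sum>x\<in>X. u x * (u x)\<^sup>2) = S 3"
      unfolding S_def by (intro sum.cong refl) (simp add: power3_eq_cube power2_eq_square mult.assoc)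
    moreover have "(\<Sum>x\<in>X. ((u x)\<^sup>2)\<^sup>2) = S 4"
      unfolding S_def by (simp flip: power_mult)
    ultimately show ?thesis unfolding S_def by simp
  qed
  have "S 2 * S 2 ^ 3 = ((S 2)\<^sup>2)\<^sup>2" by (simp add: power2_eq_square power3_eq_cube)
  also have "\<dots> \<le> (S 1 * S 3)\<^sup>2" using S2 S_nonneg by (intro power_mono) auto
  also have "\<dots> = (S 1)\<^sup>2 * (S 3)\<^sup>2" by (simp add: power_mult_distrib)
  also have "\<dots> \<le> (S 1)\<^sup>2 * (S 2 * S 4)" using S3 by (intro mult_left_mono) auto
  finally have "S 2 * S 2 ^ 3 \<le> S 2 * ((S 1)\<^sup>2 * S 4)" by (simp add: mult_ac)
  then have "S 2 ^ 3 \<le> (S 1)\<^sup>2 * S 4"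
    using S_nonneg[of 2] S_nonneg[of 4] by (cases "S 2 = 0") auto
  then show ?thesis unfolding S_def by simp
qed

lemma mean_bounds_from_moments:
  fixes u :: "'a \<Rightarrow> real" and K C :: real
  assumes X: "finite X" "X \<noteq> {}" and nonneg: "\<And>x. x \<in> X \<Longrightarrow> 0 \<le> u x" and K: "0 < K"
    and second: "real (card X) * K \<le> (\<Sum>x\<in>X. (u x)\<^sup>2)"
    and fourth: "(\<Sum>x\<in>X. u x ^ 4) \<le> real (card X) * (C * K\<^sup>2)"
  defines "A \<equiv> (\<Sum>x\<in>X. u x) / real (card X)"
  shows "K \<le> C * A\<^sup>2" and "A ^ 4 \<le> C * K\<^sup>2"
proof -
  define n where "n = real (card X)"
  have n: "n > 0" unfolding n_def using X by auto
  have sum_u: "(\<Sum>x\<in>X. u x) = n * A" unfolding A_def n_def using n n_def by simp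
  have "(n * K) ^ 3 \<le> (\<Sum>x\<in>X. (u x)\<^sup>2) ^ 3"
    using second n K unfolding n_def by (intro power_mono) auto
  also have "\<dots> \<le> (\<Sum>x\<in>X. u x)\<^sup>2 * (\<Sum>x\<in>X. u x ^ 4)"
    using nonneg by (rule sum_squares_cube_le)
  also have "\<dots> \<le> (n * A)\<^sup>2 * (n * (C * K\<^sup>2))"
    unfolding sum_u using fourth unfolding n_def by (intro mult_left_mono) auto
  finally have "n ^ 3 * K\<^sup>2 * K \<le> n ^ 3 * K\<^sup>2 * (C * A\<^sup>2)"
    by (simp add: power3_eq_cube power2_eq_square mult_ac)
  then show "K \<le> C * A\<^sup>2" by (rule mult_left_le_imp_le) (use n K in simp)
  have "(n * A) ^ 4 \<le> n ^ 3 * (\<Sum>x\<in>X. u x ^ 4)"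
    using sum_fourth_power_ge[of u X, folded n_def] unfolding sum_u .
  also have "\<dots> \<le> n ^ 3 * (n * (C * K\<^sup>2))"
    using fourth n unfolding n_def by (intro mult_left_mono) auto
  finally have "n ^ 4 * A ^ 4 \<le> n ^ 4 * (C * K\<^sup>2)"
    by (simp add: power_mult_distrib power_numeral_reduce mult_ac)
  then show "A ^ 4 \<le> C * K\<^sup>2" by (rule mult_left_le_imp_le) (use n in simp)
qed

section \<open>Additive structure of the Fibonacci numbers\<close>

lemma fib_less_fib:
  assumes "2 \<le> m" "m < n"
  shows "fib m < fib n"
proof -
  have step: "fib (k + 2) < fib (Suc k + 2)" for k
    using fib_neq_0_nat[of "Suc k"] by (simp add: numeral_2_eq_2)
  from assms have "m - 2 < n - 2" by simp
  then have "fib (m - 2 + 2) < fib (n - 2 + 2)"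
    by (rule lift_Suc_mono_less[of "\<lambda>k. fib (k + 2)", OF step])
  moreover have "m - 2 + 2 = m" "n - 2 + 2 = n" using assms by simp_all
  ultimately show ?thesis by metis
qed

lemma fib_le_two_power: "fib n \<le> 2 ^ n"
  by (induction n rule: fib.induct) auto

(* fib is strictly increasing from index 2 on; fib 1 = fib 2 is its only coincidence. *)
lemma fib_preimage_subset:
  obtains m where "{n. 0 < n \<and> fib n = t} \<subseteq> {1, m}"
proof (cases "\<exists>m\<ge>2. fib m = t")
  case True
  then obtain m where m: "2 \<le> m" "fib m = t" by blast
  have "n = m" if "2 \<le> n" "fib n = t" for n
    using fib_less_fib[of n m] fib_less_fib[of m n] that m by (cases n m rule: linorder_cases) auto
  then have "{n. 0 < n \<and> fib n = t} \<subseteq> {1, m}" by (auto simp: Suc_le_eq[symmetric])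
  then show ?thesis by (rule that)
next
  case False
  have "n = 1" if "0 < n" "fib n = t" for n
    using False that by (cases "2 \<le> n") auto
  then have "{n. 0 < n \<and> fib n = t} \<subseteq> {1, 1}" by auto
  then show ?thesis by (rule that)
qed

lemma fib_add_3_gt_double: "0 < c \<Longrightarrow> c + 3 \<le> d \<Longrightarrow> 2 * fib c < fib d"
proof -
  assume "0 < c" "c + 3 \<le> d"
  have "fib (c + 3) = 2 * fib (c + 1) + fib c" by (simp add: numeral_3_eq_3)
  moreover have "fib c \<le> fib (c + 1)" "0 < fib c" "fib (c + 3) \<le> fib d"
    using \<open>0 < c\<close> \<open>c + 3 \<le> d\<close> by (simp_all add: fib_mono fib_neq_0_nat)
  ultimately show ?thesis by linarith
qed

lemma fib_within_factor_two_subset: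
  obtains m where "{c. 0 < c \<and> fib c \<le> v \<and> v \<le> 2 * fib c} \<subseteq> {m..<m + 3}"
proof (cases "{c. 0 < c \<and> fib c \<le> v \<and> v \<le> 2 * fib c} = {}")
  case False
  define m where "m = (LEAST c. 0 < c \<and> fib c \<le> v \<and> v \<le> 2 * fib c)"
  have m: "0 < m" "v \<le> 2 * fib m"
    using LeastI_ex[of "\<lambda>c. 0 < c \<and> fib c \<le> v \<and> v \<le> 2 * fib c"] False unfolding m_def by auto
  have "c \<in> {m..<m + 3}" if "0 < c" "fib c \<le> v" "v \<le> 2 * fib c" for c
  proof -
    have "m \<le> c" unfolding m_def using that by (intro Least_le) simp
    moreover have "c < m + 3" using fib_add_3_gt_double[of m c] m that by linarith
    ultimately show ?thesis by simp
  qed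
  then have "{c. 0 < c \<and> fib c \<le> v \<and> v \<le> 2 * fib c} \<subseteq> {m..<m + 3}" by blast
  then show ?thesis by (rule that)
qed (use that in blast)

(* A representation with d \<le> c has fib c \<le> v \<le> 2 * fib c, which leaves three values of c
   and then at most two values of d. *)
lemma fib_sum_representations:
  fixes v :: nat
  defines "R \<equiv> {(c, d). 0 < c \<and> 0 < d \<and> fib c + fib d = v}"
  shows "finite R" and "card R \<le> 12"
proof -
  define D where "D t = {n. 0 < n \<and> fib n = t}" for t
  have D: "finite (D t)" "card (D t) \<le> 2" for t
  proof -
    obtain m where "D t \<subseteq> {1, m}" using fib_preimage_subset unfolding D_def .
    moreover have "card {1, m} \<le> 2" by (cases "m = 1") auto
    ultimately show "finite (D t)" "card (D t) \<le> 2"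
      using finite_subset card_mono[of "{1, m}" "D t"] by auto
  qed
  obtain m where C: "{c. 0 < c \<and> fib c \<le> v \<and> v \<le> 2 * fib c} \<subseteq> {m..<m + 3}"
    using fib_within_factor_two_subset .
  define R1 where "R1 = {(c, d) \<in> R. d \<le> c}"
  define T where "T = Sigma {m..<m + 3} (\<lambda>c. D (v - fib c))"
  have "R1 \<subseteq> T"
  proof safe
    fix c d assume "(c, d) \<in> R1"
    then have "0 < c" "0 < d" "fib c + fib d = v" "fib d \<le> fib c"
      unfolding R1_def R_def by (auto intro: fib_mono)
    then show "(c, d) \<in> T" using C unfolding T_def D_def by auto
  qed
  have T: "finite T" "card T \<le> 6"
  proof -
    show "finite T" unfolding T_def using D(1) by blast
    have "card T = (\<Sum>c\<in>{m..<m + 3}. card (D (v - fib c)))" unfolding T_def using D(1) by simp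
    also have "\<dots> \<le> (\<Sum>c\<in>{m..<m + 3}. 2)" by (intro sum_mono D(2))
    finally show "card T \<le> 6" by simp
  qed
  have R1: "finite R1" "card R1 \<le> 6"
    using finite_subset[OF \<open>R1 \<subseteq> T\<close> T(1)] card_mono[OF T(1) \<open>R1 \<subseteq> T\<close>] T(2) by simp_all
  have R_sub: "R \<subseteq> R1 \<union> prod.swap ` R1" unfolding R1_def R_def by force
  have U: "finite (R1 \<union> prod.swap ` R1)" using R1(1) by simp
  have "card (R1 \<union> prod.swap ` R1) \<le> 12"
    using card_Un_le[of R1 "prod.swap ` R1"] card_image_le[OF R1(1), of prod.swap] R1(2) by linarith
  then show "finite R" "card R \<le> 12"
    using finite_subset[OF R_sub U] card_mono[OF U R_sub] by simp_all
qed

section \<open>Primes with few spurious collisions\<close>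

lemma card_prime_factors_le:
  fixes n :: nat
  assumes "n \<noteq> 0" "n \<le> 2 ^ L"
  shows "card (prime_factors n) \<le> L"
proof -
  have "(2::nat) ^ card (prime_factors n) = (\<Prod>p\<in>prime_factors n. 2)" by simp
  also have "\<dots> \<le> (\<Prod>p\<in>prime_factors n. p ^ multiplicity p n)"
  proof (intro prod_mono conjI)
    fix p assume p: "p \<in> prime_factors n"
    then have "2 \<le> p" "0 < multiplicity p n"
      using prime_factors_multiplicity[of n] by (auto intro: prime_ge_2_nat)
    then have "p ^ 1 \<le> p ^ multiplicity p n" by (intro power_increasing) auto
    with \<open>2 \<le> p\<close> show "2 \<le> p ^ multiplicity p n" by simp
  qed simp
  also have "\<dots> = n" using prod_prime_factors[OF assms(1)] by simp
  finally have "(2::nat) ^ card (prime_factors n) \<le> 2 ^ L" using assms(2) by linarith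
  then show ?thesis by (rule power_le_imp_le_exp[rotated]) simp
qed

lemma double_counting_card_le:
  assumes "finite P" "finite Q" and bound: "\<And>q. q \<in> Q \<Longrightarrow> card {p\<in>P. R p q} \<le> L"
  shows "card {p\<in>P. T < card {q\<in>Q. R p q}} * T \<le> card Q * L"
proof -
  define B where "B = {p\<in>P. T < card {q\<in>Q. R p q}}"
  have "card B * T \<le> (\<Sum>p\<in>B. card {q\<in>Q. R p q})"
    using sum_mono[of B "\<lambda>_. T" "\<lambda>p. card {q\<in>Q. R p q}"] unfolding B_def by simp
  also have "\<dots> \<le> (\<Sum>p\<in>P. card {q\<in>Q. R p q})"
    using assms(1) by (intro sum_mono2) (auto simp: B_def)
  also have "\<dots> = (\<Sum>p\<in>P. \<Sum>q\<in>Q. if R p q then 1 else 0)"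
    using assms(2) by (simp add: sum.If_cases Int_def conj_commute)
  also have "\<dots> = (\<Sum>q\<in>Q. \<Sum>p\<in>P. if R p q then 1 else 0)" by (rule sum.swap)
  also have "\<dots> = (\<Sum>q\<in>Q. card {p\<in>P. R p q})"
    using assms(1) by (simp add: sum.If_cases Int_def conj_commute)
  also have "\<dots> \<le> card Q * L"
    using sum_mono[of Q "\<lambda>q. card {p\<in>P. R p q}" "\<lambda>_. L"] bound by simp
  finally show ?thesis unfolding B_def .
qed

fun fib_pair_sum :: "nat \<times> nat \<Rightarrow> int" where
  "fib_pair_sum (a, b) = int (fib a + fib b)"

definition spurious_fib_collisions :: "nat \<Rightarrow> nat \<Rightarrow> nat" where
  "spurious_fib_collisions K p = card {(ab, cd) \<in> ({1..K} \<times> {1..K}) \<times> ({1..K} \<times> {1..K}).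
      fib_pair_sum ab \<noteq> fib_pair_sum cd \<and> int p dvd fib_pair_sum ab - fib_pair_sum cd}"

lemma card_fib_pair_sum_collisions_le:
  fixes K :: nat
  defines "J \<equiv> {1..K} \<times> {1..K}"
  shows "card {(ab, cd) \<in> J \<times> J. fib_pair_sum ab = fib_pair_sum cd} \<le> 12 * K\<^sup>2"
proof -
  define R where "R v = {(c, d). 0 < c \<and> 0 < d \<and> fib c + fib d = v}" for v
  define T where "T = Sigma J (\<lambda>(a, b). R (fib a + fib b))"
  have R: "finite (R v)" "card (R v) \<le> 12" for v
    unfolding R_def by (rule fib_sum_representations)+
  have sub: "{(ab, cd) \<in> J \<times> J. fib_pair_sum ab = fib_pair_sum cd} \<subseteq> T"
    unfolding T_def J_def R_def by auto
  have fin: "finite T" unfolding T_def J_def using R(1) by auto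
  have "card T \<le> 12 * K\<^sup>2"
  proof -
    have "card T = (\<Sum>ab\<in>J. card (R (fib (fst ab) + fib (snd ab))))"
      unfolding T_def J_def using R(1) by (simp add: case_prod_beta)
    also have "\<dots> \<le> (\<Sum>ab\<in>J. 12)" by (intro sum_mono R(2))
    finally show ?thesis by (simp add: J_def power2_eq_square)
  qed
  then show ?thesis using card_mono[OF fin sub] by linarith
qed

lemma fib_pair_sum_bounds:
  assumes "ab \<in> {1..K} \<times> {1..K}"
  shows "0 \<le> fib_pair_sum ab" "fib_pair_sum ab \<le> 2 ^ Suc K"
proof -
  obtain a b where ab: "ab = (a, b)" "a \<le> K" "b \<le> K" using assms by auto
  have "fib a + fib b \<le> 2 ^ K + 2 ^ K"
    using fib_mono[OF ab(2)] fib_mono[OF ab(3)] fib_le_two_power[of K] by linarith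
  then have "int (fib a + fib b) \<le> int (2 ^ Suc K)" by (simp only: of_nat_le_iff) simp
  then show "0 \<le> fib_pair_sum ab" "fib_pair_sum ab \<le> 2 ^ Suc K" using ab(1) by simp_all
qed

lemma card_primes_many_spurious_fib_collisions_le:
  assumes K: "K \<ge> 1" and P: "finite P" "\<And>p. p \<in> P \<Longrightarrow> prime p"
  shows "card {p\<in>P. K\<^sup>2 < spurious_fib_collisions K p} \<le> 2 * K ^ 3"
proof -
  define Q where "Q = ({1..K} \<times> {1..K}) \<times> ({1..K} \<times> {1..K})"
  define R where "R p = (\<lambda>(ab, cd). fib_pair_sum ab \<noteq> fib_pair_sum cd
      \<and> int p dvd fib_pair_sum ab - fib_pair_sum cd)" for p
  have collisions_eq: "spurious_fib_collisions K p = card {q\<in>Q. R p q}" for p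
    unfolding spurious_fib_collisions_def Q_def R_def by (rule arg_cong[where f=card]) auto
  have "card {p\<in>P. R p q} \<le> K + 1" if "q \<in> Q" for q
  proof -
    obtain ab cd where q: "q = (ab, cd)" "ab \<in> {1..K} \<times> {1..K}" "cd \<in> {1..K} \<times> {1..K}"
      using \<open>q \<in> Q\<close> unfolding Q_def by auto
    define m where "m = nat \<bar>fib_pair_sum ab - fib_pair_sum cd\<bar>"
    have "m \<le> 2 ^ Suc K"
      using fib_pair_sum_bounds[OF q(2)] fib_pair_sum_bounds[OF q(3)]
      unfolding m_def by (simp add: nat_le_iff abs_le_iff)
    have "{p\<in>P. R p q} \<subseteq> prime_factors m"
      using P(2) unfolding R_def m_def q(1) by (auto simp: in_prime_factors_iff)
    show ?thesis
    proof (cases "m = 0")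
      case True
      then have "{p\<in>P. R p q} = {}" unfolding R_def m_def q(1) by auto
      then show ?thesis by (metis card.empty zero_le)
    next
      case False
      then show ?thesis
        using card_mono[OF _ \<open>{p\<in>P. R p q} \<subseteq> prime_factors m\<close>]
          card_prime_factors_le[OF False \<open>m \<le> 2 ^ Suc K\<close>] by simp
    qed
  qed
  then have "card {p\<in>P. K\<^sup>2 < card {q\<in>Q. R p q}} * K\<^sup>2 \<le> card Q * (K + 1)"
    by (intro double_counting_card_le P(1)) (simp_all add: Q_def)
  also have "\<dots> = K\<^sup>2 * (K + 1) * K\<^sup>2" by (simp add: Q_def power2_eq_square algebra_simps)
  finally have "card {p\<in>P. K\<^sup>2 < card {q\<in>Q. R p q}} \<le> K\<^sup>2 * (K + 1)" using K by simp
  also have "\<dots> \<le> 2 * K ^ 3" using K by (simp add: power2_eq_square power3_eq_cube)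
  finally show ?thesis unfolding collisions_eq .
qed

section \<open>Averages of the Fibonacci exponential sum\<close>

definition fib_exp_sum :: "nat \<Rightarrow> nat \<Rightarrow> nat \<Rightarrow> complex" where
  "fib_exp_sum K p x = (\<Sum>n\<in>{1..K}. e2pi (real x * real (fib n) / real p))"

lemma fib_exp_sum_second_moment:
  assumes "p > 0"
  shows "real p * real K \<le> (\<Sum>x<p. (cmod (fib_exp_sum K p x))\<^sup>2)"
proof -
  have "(\<lambda>n. (n, n)) ` {1..K} \<subseteq> {(i, j) \<in> {1..K} \<times> {1..K}. int p dvd int (fib i) - int (fib j)}"
    by auto
  then have "card ((\<lambda>n. (n, n)) ` {1..K})
      \<le> card {(i, j) \<in> {1..K} \<times> {1..K}. int p dvd int (fib i) - int (fib j)}"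
    by (intro card_mono) (auto intro: rev_finite_subset[of "{1..K} \<times> {1..K}"])
  moreover have "card ((\<lambda>n. (n, n)) ` {1..K}) = K" by (simp add: card_image inj_on_def)
  ultimately have "real p * real K
      \<le> real p * real (card {(i, j) \<in> {1..K} \<times> {1..K}. int p dvd int (fib i) - int (fib j)})"
    by (simp add: mult_le_cancel_left)
  also have "\<dots> = (\<Sum>x<p. (cmod (fib_exp_sum K p x))\<^sup>2)"
    using sum_norm_exp_sum_squared[OF assms, of "{1..K}" "\<lambda>n. int (fib n)"]
    unfolding fib_exp_sum_def by simp
  finally show ?thesis .
qed

lemma fib_exp_sum_fourth_moment:
  assumes "p > 0" and few: "spurious_fib_collisions K p \<le> K\<^sup>2"
  shows "(\<Sum>x<p. cmod (fib_exp_sum K p x) ^ 4) \<le> real p * (13 * (real K)\<^sup>2)"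
proof -
  define J where "J = {1..K} \<times> {1..K}"
  let ?e = "\<lambda>x t. e2pi (real x * of_int t / real p)"
  have square: "(fib_exp_sum K p x)\<^sup>2 = (\<Sum>ab\<in>J. ?e x (fib_pair_sum ab))" for x
  proof -
    have "?e x (int (fib a)) * ?e x (int (fib b)) = ?e x (fib_pair_sum (a, b))" for a b
      by (simp add: add_divide_distrib distrib_left flip: e2pi_add)
    then show ?thesis
      unfolding fib_exp_sum_def power2_eq_square J_def sum_product sum.cartesian_product
      by (simp add: case_prod_beta) (intro sum.cong refl, clarsimp)
  qed
  have "card {(ab, cd) \<in> J \<times> J. int p dvd fib_pair_sum ab - fib_pair_sum cd}
      \<le> card ({(ab, cd) \<in> J \<times> J. fib_pair_sum ab = fib_pair_sum cd}
          \<union> {(ab, cd) \<in> J \<times> J. fib_pair_sum ab \<noteq> fib_pair_sum cd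
              \<and> int p dvd fib_pair_sum ab - fib_pair_sum cd})"
    by (intro card_mono) (auto intro: rev_finite_subset[of "J \<times> J"] simp: J_def)
  also have "\<dots> \<le> card {(ab, cd) \<in> J \<times> J. fib_pair_sum ab = fib_pair_sum cd}
      + card {(ab, cd) \<in> J \<times> J. fib_pair_sum ab \<noteq> fib_pair_sum cd
          \<and> int p dvd fib_pair_sum ab - fib_pair_sum cd}"
    by (rule card_Un_le)
  also have "\<dots> \<le> 12 * K\<^sup>2 + K\<^sup>2"
    using card_fib_pair_sum_collisions_le[of K] few
    unfolding spurious_fib_collisions_def J_def by (rule add_mono)
  finally have collisions: "card {(ab, cd) \<in> J \<times> J. int p dvd fib_pair_sum ab - fib_pair_sum cd}
      \<le> 13 * K\<^sup>2" by simp
  have "(\<Sum>x<p. cmod (fib_exp_sum K p x) ^ 4) = (\<Sum>x<p. (cmod (\<Sum>ab\<in>J. ?e x (fib_pair_sum ab)))\<^sup>2)"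
    by (simp add: norm_power flip: square power_mult)
  also have "\<dots> = real p * real (card {(ab, cd) \<in> J \<times> J. int p dvd fib_pair_sum ab - fib_pair_sum cd})"
    by (rule sum_norm_exp_sum_squared[OF \<open>p > 0\<close>]) (simp add: J_def)
  also have "\<dots> \<le> real p * (13 * (real K)\<^sup>2)"
    using collisions of_nat_mono[OF collisions, where 'a=real] by (intro mult_left_mono) auto
  finally show ?thesis .
qed

lemma fib_exp_sum_mean_bounds:
  assumes "p > 0" "K \<ge> 1" and few: "spurious_fib_collisions K p \<le> K\<^sup>2"
  defines "A \<equiv> (\<Sum>x<p. cmod (fib_exp_sum K p x)) / real p"
  shows "sqrt (real K / 13) \<le> A" and "A \<le> 2 * sqrt (real K)"
proof -
  have A_nonneg: "A \<ge> 0" unfolding A_def by (simp add: sum_nonneg)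
  have second: "real (card {..<p}) * real K \<le> (\<Sum>x\<in>{..<p}. (cmod (fib_exp_sum K p x))\<^sup>2)"
    using fib_exp_sum_second_moment[OF \<open>p > 0\<close>] by simp
  have fourth: "(\<Sum>x\<in>{..<p}. cmod (fib_exp_sum K p x) ^ 4) \<le> real (card {..<p}) * (13 * (real K)\<^sup>2)"
    using fib_exp_sum_fourth_moment[OF \<open>p > 0\<close> few] by simp
  have "{..<p} \<noteq> {}" "0 < real K" using assms by auto
  note bounds = mean_bounds_from_moments[OF finite_lessThan this(1) norm_ge_zero this(2) second fourth]
  have "real K \<le> 13 * A\<^sup>2" "A ^ 4 \<le> 13 * (real K)\<^sup>2"
    using bounds unfolding A_def card_lessThan by auto
  moreover have "13 * (real K)\<^sup>2 \<le> (4 * real K)\<^sup>2" by (simp add: power_mult_distrib)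
  moreover have "(A\<^sup>2)\<^sup>2 = A ^ 4" by (simp flip: power_mult)
  ultimately have lower: "real K / 13 \<le> A\<^sup>2" and upper: "(A\<^sup>2)\<^sup>2 \<le> (4 * real K)\<^sup>2"
    by linarith+
  show "sqrt (real K / 13) \<le> A" using real_sqrt_le_mono[OF lower] A_nonneg by simp
  have "A\<^sup>2 \<le> 4 * real K" using upper by (rule power2_le_imp_le) simp
  then show "A \<le> 2 * sqrt (real K)"
    using real_sqrt_le_mono[of "A\<^sup>2" "4 * real K"] A_nonneg by (simp add: real_sqrt_mult)
qed

lemma fib_avg_eq_fib_exp_sum:
  assumes "p > 0"
  shows "fib_avg p N \<gamma> = (\<Sum>x<p. cmod (fib_exp_sum (nat \<lfloor>real N powr \<gamma>\<rfloor>) p x)) / real p"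
proof -
  define y where "y = real N powr \<gamma>"
  have index: "real n \<le> y \<longleftrightarrow> n \<le> nat \<lfloor>y\<rfloor>" for n
  proof
    show "real n \<le> y \<Longrightarrow> n \<le> nat \<lfloor>y\<rfloor>" by (rule le_nat_floor)
    assume "n \<le> nat \<lfloor>y\<rfloor>"
    then have "real n \<le> real (nat \<lfloor>y\<rfloor>)" by (rule of_nat_mono)
    also have "\<dots> \<le> y" by (rule of_nat_floor) (simp add: y_def)
    finally show "real n \<le> y" .
  qed
  have "{n. 1 \<le> n \<and> real n \<le> y} = {1..nat \<lfloor>y\<rfloor>}"
    by (rule set_eqI) (simp only: mem_Collect_eq atLeastAtMost_iff index)
  moreover have "{0..p - 1} = {..<p}" using assms by auto
  ultimately show ?thesis unfolding fib_avg_def fib_exp_sum_def e2pi_def y_def by simp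
qed

lemma nat_floor_bounds:
  fixes y :: real
  assumes "1 \<le> y"
  shows "1 \<le> nat \<lfloor>y\<rfloor>" "real (nat \<lfloor>y\<rfloor>) \<le> y" "y / 2 \<le> real (nat \<lfloor>y\<rfloor>)"
proof -
  have "1 \<le> \<lfloor>y\<rfloor>" "real (nat \<lfloor>y\<rfloor>) = of_int \<lfloor>y\<rfloor>" using assms by simp_all
  then show "1 \<le> nat \<lfloor>y\<rfloor>" "real (nat \<lfloor>y\<rfloor>) \<le> y" "y / 2 \<le> real (nat \<lfloor>y\<rfloor>)"
    using floor_correct[of y] by linarith+
qed

lemma fib_avg_bounds_if_few_spurious_collisions:
  assumes "prime p" "N \<ge> 1" "0 < \<gamma>"
    and few: "spurious_fib_collisions (nat \<lfloor>real N powr \<gamma>\<rfloor>) p \<le> (nat \<lfloor>real N powr \<gamma>\<rfloor>)\<^sup>2"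
  shows "1/6 * real N powr (\<gamma>/2) \<le> fib_avg p N \<gamma>" and "fib_avg p N \<gamma> \<le> 2 * real N powr (\<gamma>/2)"
proof -
  define y where "y = real N powr \<gamma>"
  define K where "K = nat \<lfloor>y\<rfloor>"
  have "y \<ge> 1" unfolding y_def using assms by (intro ge_one_powr_ge_zero) auto
  then have K: "K \<ge> 1" "real K \<le> y" "y / 2 \<le> real K"
    unfolding K_def by (rule nat_floor_bounds)+
  have "p > 0" using \<open>prime p\<close> by (rule prime_gt_0_nat)
  have avg: "fib_avg p N \<gamma> = (\<Sum>x<p. cmod (fib_exp_sum K p x)) / real p"
    unfolding K_def y_def using \<open>p > 0\<close> by (rule fib_avg_eq_fib_exp_sum)
  note mean = fib_exp_sum_mean_bounds[OF \<open>p > 0\<close> K(1) few[folded y_def K_def], folded avg]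
  have sqrt_y: "real N powr (\<gamma>/2) = sqrt y" unfolding y_def by (simp add: powr_half_sqrt_powr)
  have "sqrt y / 6 = sqrt (y / 36)" by (simp add: real_sqrt_divide)
  also have "\<dots> \<le> sqrt (real K / 13)" using K \<open>y \<ge> 1\<close> by simp
  also have "\<dots> \<le> fib_avg p N \<gamma>" by (rule mean(1))
  finally show "1/6 * real N powr (\<gamma>/2) \<le> fib_avg p N \<gamma>" using sqrt_y by simp
  have "fib_avg p N \<gamma> \<le> 2 * sqrt (real K)" by (rule mean(2))
  also have "\<dots> \<le> 2 * sqrt y" using K by simp
  finally show "fib_avg p N \<gamma> \<le> 2 * real N powr (\<gamma>/2)" using sqrt_y by simp
qed

lemma card_good_primes_ge:
  assumes "0 < \<gamma>" "N \<ge> 1"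
  shows "real (card {p. prime p \<and> p \<le> N}) - 2 * real N powr (3 * \<gamma>)
    \<le> real (card {p. prime p \<and> p \<le> N \<and>
          1/6 * real N powr (\<gamma>/2) \<le> fib_avg p N \<gamma> \<and> fib_avg p N \<gamma> \<le> 2 * real N powr (\<gamma>/2)})"
    (is "real (card ?P) - _ \<le> real (card ?G)")
proof -
  define y where "y = real N powr \<gamma>"
  define K where "K = nat \<lfloor>y\<rfloor>"
  define B where "B = {p\<in>?P. K\<^sup>2 < spurious_fib_collisions K p}"
  have "y \<ge> 1" unfolding y_def using assms by (intro ge_one_powr_ge_zero) auto
  then have K: "K \<ge> 1" "real K \<le> y" unfolding K_def by (rule nat_floor_bounds)+
  have "?P \<subseteq> ?G \<union> B"
    using fib_avg_bounds_if_few_spurious_collisions[OF _ \<open>N \<ge> 1\<close> \<open>0 < \<gamma>\<close>]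
    unfolding B_def K_def y_def by (auto simp: not_less)
  moreover have "finite (?G \<union> B)" by (rule finite_subset[of _ ?P]) (auto simp: B_def)
  ultimately have "card ?P \<le> card (?G \<union> B)" by (intro card_mono)
  also have "\<dots> \<le> card ?G + card B" by (rule card_Un_le)
  finally have "real (card ?P) \<le> real (card ?G) + real (card B)" by linarith
  moreover have "card B \<le> 2 * K ^ 3"
    unfolding B_def by (intro card_primes_many_spurious_fib_collisions_le K(1)) auto
  then have "real (card B) \<le> 2 * real K ^ 3"
    by (metis of_nat_le_iff of_nat_mult of_nat_numeral of_nat_power)
  moreover have "real K ^ 3 \<le> y ^ 3" using K by (intro power_mono) auto
  moreover have "y ^ 3 = real N powr (3 * \<gamma>)"
    unfolding y_def using assms by (simp add: powr_powr mult.commute flip: powr_realpow)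
  ultimately show ?thesis by linarith
qed

lemma card_ratio_bounds:
  fixes E :: real
  assumes "finite P" "P \<noteq> {}" "G \<subseteq> P" and lower: "real (card P) - E \<le> real (card G)"
  shows "1 - E / real (card P) \<le> real (card G) / real (card P)"
    and "real (card G) / real (card P) \<le> 1"
proof -
  have pos: "0 < real (card P)" using assms(1,2) by (simp add: card_gt_0_iff)
  have "1 - E / real (card P) = (real (card P) - E) / real (card P)"
    using pos by (simp add: diff_divide_distrib)
  also have "\<dots> \<le> real (card G) / real (card P)"
    using lower pos by (intro divide_right_mono) auto
  finally show "1 - E / real (card P) \<le> real (card G) / real (card P)" .
  have "card G \<le> card P" using assms(1,3) by (rule card_mono)
  then show "real (card G) / real (card P) \<le> 1" using pos by simp
qed

theorem theorem6:
  fixes \<gamma> :: real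
  assumes "0 < \<gamma>" and "\<gamma> < 1/3"
  shows "\<exists>c1 c2 :: real. c1 > 0 \<and> c2 > 0 \<and>
    ((\<lambda>N::nat. real (card {p. prime p \<and> p \<le> N \<and>
          c1 * real N powr (\<gamma>/2) \<le> fib_avg p N \<gamma> \<and>
          fib_avg p N \<gamma> \<le> c2 * real N powr (\<gamma>/2)})
        / real (card {p::nat. prime p \<and> p \<le> N})) \<longlongrightarrow> 1) at_top"
proof -
  define P where "P N = {p::nat. prime p \<and> p \<le> N}" for N
  define G where "G N = {p. prime p \<and> p \<le> N \<and>
    1/6 * real N powr (\<gamma>/2) \<le> fib_avg p N \<gamma> \<and> fib_avg p N \<gamma> \<le> 2 * real N powr (\<gamma>/2)}" for N
  define r where "r N = real (card (G N)) / real (card (P N))" for N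
  define lo where "lo N = 1 - 2 * real N powr (3 * \<gamma>) / real (card (P N))" for N
  have bounds: "lo N \<le> r N \<and> r N \<le> 1" if "N \<ge> 2" for N
  proof -
    have "2 \<in> P N" using that by (simp add: P_def)
    then show ?thesis
      using card_ratio_bounds[of "P N" "G N" "2 * real N powr (3 * \<gamma>)"]
        card_good_primes_ge[OF assms(1), of N] that
      unfolding r_def lo_def P_def G_def by fastforce
  qed
  have "((\<lambda>N. 1 - 2 * (real N powr (3 * \<gamma>) / real (card (P N)))) \<longlongrightarrow> 1 - 2 * 0) at_top"
    unfolding P_def using assms by (intro tendsto_intros powr_div_prime_count_tendsto_0) simp
  then have "(lo \<longlongrightarrow> 1) at_top" unfolding lo_def by simp
  moreover have "eventually (\<lambda>N. lo N \<le> r N) at_top" "eventually (\<lambda>N. r N \<le> 1) at_top"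
    using bounds by (auto intro!: eventually_at_top_linorderI[of 2])
  ultimately have "(r \<longlongrightarrow> 1) at_top" by (intro tendsto_sandwich[of lo r _ "\<lambda>_. 1"]) auto
  then show ?thesis
    unfolding r_def G_def P_def by (intro exI[of _ "1/6"] exI[of _ 2] conjI) simp_all
qed

end
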